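(* Let $n\in\mathbb{N}\cup\{0\}$, $A_1,\dots,A_n\in\mathscr{Q}$ and $\mathcal{A}=\{A_1,\dots,A_n\}$. An option set $S\in\mathscr{Q}$ belongs to $\mathrm{Ex}(\mathcal{A})$ if and only if either $S\cap\mathscr{V}_{>0}\neq\emptyset$, or $n\neq0$ and there exists $T\in\mathrm{Posi}'(A_1,\dots,A_n)$ such that for every $t\in T$ there is some $s\in S\cup\{0\}$ with $t\le s$.
   Context: Let $\mathcal{X}$ be a nonempty set and let $\mathscr{V}$ be the real vector space of all functions $u:\mathcal{X}\to\mathbb{R}$ (options), with pointwise operations. For $u,v\in\mathscr{V}$, $u\le v$ iff $u(x)\le v(x)$ for all $x\in\mathcal{X}$, and $u<v$ iff $u\le v$ and $u\neq v$. Let $\mathscr{V}_{>0}=\{u\in\mathscr{V}:0<u\}$ and $\mathscr{V}^s_{>0}=\{\{u\}:u\in\mathscr{V}_{>0}\}$. Let $\mathscr{Q}$ be the set of all finite subsets of $\mathscr{V}$ (including $\emptyset$). For a positive integer $n$, $\mathbb{R}^{n,+}=\{\boldsymbol\lambda\in\mathbb{R}^n:\lambda_j\ge0\ \forall j,\ \sum_j\lambda_j>0\}$, and for $\boldsymbol\lambda\in\mathbb{R}^n$, $\mathbf u=(u_1,\dots,u_n)\in\mathscr{V}^n$, $\boldsymbol\lambda\mathbf u=\sum_{j=1}^n\lambda_ju_j$. A set of desirable option sets is any $K\subseteq\mathscr{Q}$. It is coherent if for all $A,B\in K$: (K0) $A\setminus\{0\}\in K$; (K1) $\{0\}\notin K$;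 (K2) $\mathscr{V}^s_{>0}\subseteq K$; (K3) $\{\boldsymbol\lambda(\mathbf u)\mathbf u:\mathbf u\in A\times B\}\in K$ for every map $\boldsymbol\lambda:A\times B\to\mathbb{R}^{2,+}$; (K4) $A\cup Q\in K$ for all $Q\in\mathscr{Q}$. $\bar{\mathbf K}$ denotes the set of coherent sets of desirable option sets. An assessment is any subset $\mathcal{A}\subseteq\mathscr{Q}$. Let $\bar{\mathbf K}(\mathcal A)=\{K\in\bar{\mathbf K}:\mathcal A\subseteq K\}$ and $\mathrm{Ex}(\mathcal A)=\bigcap\bar{\mathbf K}(\mathcal A)$, with the convention $\bigcap\emptyset=\mathscr{Q}$. For a positive integer $n$ and $A_1,\dots,A_n\in\mathscr{Q}$: $\mathrm{Posi}'(A_1,\dots,A_n)=\{\{\boldsymbol\lambda(\mathbf u)\mathbf u:\mathbf u\in\times_{j=1}^nA_j\}:\ \boldsymbol\lambda:\times_{j=1}^nA_j\to\mathbb{R}^{n,+}\}$. *)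

theory Defs
  imports Complex_Main "HOL-Library.Function_Algebras" "HOL-Library.FuncSet"
begin

type_synonym 'x opt = "'x \<Rightarrow> real"

definition optsets :: "'x opt set set" where
  "optsets = {A. finite A}"

definition Vpos :: "'x opt set" where
  "Vpos = {u. (0::'x opt) < u}"

definition coherent :: "'x opt set set \<Rightarrow> bool" where
  "coherent K \<longleftrightarrow> K \<subseteq> optsets \<and>
     (\<forall>A\<in>K. A - {0} \<in> K) \<and>
     {0} \<notin> K \<and>
     (\<forall>u\<in>Vpos. {u} \<in> K) \<and>
     (\<forall>A\<in>K. \<forall>B\<in>K. \<forall>lam :: 'x opt \<times> 'x opt \<Rightarrow> real \<times> real.
        (\<forall>a\<in>A. \<forall>b\<in>B. fst (lam (a,b)) \<ge> 0 \<and> snd (lam (a,b)) \<ge> 0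
                      \<and> fst (lam (a,b)) + snd (lam (a,b)) > 0) \<longrightarrow>
        {(\<lambda>x. fst (lam (a,b)) * a x + snd (lam (a,b)) * b x) | a b. a \<in> A \<and> b \<in> B} \<in> K) \<and>
     (\<forall>A\<in>K. \<forall>Q\<in>optsets. A \<union> Q \<in> K)"

definition Ex :: "'x opt set set \<Rightarrow> 'x opt set set" where
  "Ex \<A> = {S \<in> optsets. \<forall>K. coherent K \<and> \<A> \<subseteq> K \<longrightarrow> S \<in> K}"

text \<open>Posi' for A_0,...,A_(n-1); tuples are extensional functions in PiE {..<n} A.\<close>
definition Posi' :: "nat \<Rightarrow> (nat \<Rightarrow> 'x opt set) \<Rightarrow> 'x opt set set" where
  "Posi' n A = {T. \<exists>lam :: (nat \<Rightarrow> 'x opt) \<Rightarrow> nat \<Rightarrow> real.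
      (\<forall>u\<in>PiE {..<n} A. (\<forall>j<n. lam u j \<ge> 0) \<and> (\<Sum>j<n. lam u j) > 0) \<and>
      T = {(\<lambda>x. \<Sum>j<n. lam u j * u j x) | u. u \<in> PiE {..<n} A}}"

end

theory Submission
  imports Defs
begin

text \<open>If \<open>K\<close> is coherent and contains \<open>A\<^sub>1, \<dots>, A\<^sub>n\<close>, then \<open>K\<close> contains every set in
  \<open>Posi'(A\<^sub>1, \<dots>, A\<^sub>n)\<close>: by induction on \<open>n\<close>, the elements of \<open>A\<^sub>n\<close> are replaced one at a time,
  each by means of rule (K3), by their combinations with a set from \<open>Posi'(A\<^sub>1, \<dots>, A\<^sub>n\<^sub>-\<^sub>1)\<close>.
  In the same way every element \<open>t\<close> of a set in \<open>K\<close> may be raised to any \<open>s \<ge> t\<close>, combining it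
  with the positive option \<open>s - t\<close>; so \<open>K\<close> contains every \<open>S\<close> dominating such a set.

  Conversely, the option sets satisfying the criterion form a coherent set containing the \<open>A\<^sub>j\<close>,
  unless \<open>{0}\<close> satisfies it, in which case every set does. Coherence is checked on a pointwise
  form of the criterion: for every tuple \<open>u\<close>, some \<open>s \<in> S \<union> {0}\<close> bounds a nonnegative combination
  of \<open>u\<close> whose weights have positive sum unless \<open>s\<close> itself is positive. Pairs of weights and bounds
  of this kind are closed under the positive combinations of rule (K3).\<close>

definition lincomb :: "nat \<Rightarrow> (nat \<Rightarrow> real) \<Rightarrow> (nat \<Rightarrow> 'x opt) \<Rightarrow> 'x opt" where
  "lincomb n \<omega> u = (\<lambda>x. \<Sum>j<n. \<omega> j * u j x)"

definition posi_weights :: "nat \<Rightarrow> (nat \<Rightarrow> 'x opt set) \<Rightarrow> ((nat \<Rightarrow> 'x opt) \<Rightarrow> nat \<Rightarrow> real) \<Rightarrow> bool" where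
  "posi_weights n A lam \<longleftrightarrow> (\<forall>u\<in>PiE {..<n} A. (\<forall>j<n. 0 \<le> lam u j) \<and> 0 < (\<Sum>j<n. lam u j))"

lemma Posi'_iff:
  "T \<in> Posi' n A \<longleftrightarrow> (\<exists>lam. posi_weights n A lam \<and> T = (\<lambda>u. lincomb n (lam u) u) ` PiE {..<n} A)"
  unfolding Posi'_def posi_weights_def lincomb_def by (auto simp: Setcompr_eq_image)

lemma Vpos_iff: "u \<in> Vpos \<longleftrightarrow> (\<forall>x. 0 \<le> u x) \<and> (\<exists>x. 0 < u x)"
  by (auto simp: Vpos_def less_fun_def le_fun_def not_le)

lemma lincomb_fun_upd_Suc: "lincomb (Suc n) \<omega> (w(n := a)) = (\<lambda>x. \<omega> n * a x + lincomb n \<omega> w x)"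
  unfolding lincomb_def by (auto intro!: sum.cong)

lemma lincomb_eq_0_if_weights_0:
  assumes "\<forall>j<n. 0 \<le> \<omega> j" and "(\<Sum>j<n. \<omega> j) = 0"
  shows "lincomb n \<omega> u = 0"
  using assms by (subst (asm) sum_nonneg_eq_0_iff) (auto simp: lincomb_def)

lemma lincomb_combination:
  "lincomb n (\<lambda>j. \<alpha> * \<omega>1 j + \<beta> * \<omega>2 j) u = (\<lambda>x. \<alpha> * lincomb n \<omega>1 u x + \<beta> * lincomb n \<omega>2 u x)"
  by (simp add: lincomb_def sum.distrib sum_distrib_left algebra_simps)

lemma PiE_fun_upd_Suc: "w \<in> PiE {..<n} A \<Longrightarrow> a \<in> A n \<Longrightarrow> w(n := a) \<in> PiE {..<Suc n} A"
  by (auto simp: PiE_iff extensional_def)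

section \<open>Coherent sets contain the positive combinations of their members\<close>

lemma coherent_finite: "coherent K \<Longrightarrow> A \<in> K \<Longrightarrow> finite A"
  unfolding coherent_def optsets_def by auto

lemma coherent_superset: "coherent K \<Longrightarrow> A \<in> K \<Longrightarrow> A \<subseteq> B \<Longrightarrow> finite B \<Longrightarrow> B \<in> K"
  unfolding coherent_def optsets_def by (metis mem_Collect_eq sup.absorb2)

lemma coherent_nonempty: "coherent K \<Longrightarrow> A \<in> K \<Longrightarrow> A \<noteq> {}"
  using coherent_superset[of K A "{0}"] unfolding coherent_def by auto

lemma coherent_Vpos: "coherent K \<Longrightarrow> u \<in> Vpos \<Longrightarrow> {u} \<in> K"
  unfolding coherent_def by auto

lemma coherent_Diff_zero: "coherent K \<Longrightarrow> A \<in> K \<Longrightarrow> A - {0} \<in> K"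
  unfolding coherent_def by auto

lemma coherent_combination:
  "coherent K \<Longrightarrow> A \<in> K \<Longrightarrow> B \<in> K \<Longrightarrow>
   (\<forall>a\<in>A. \<forall>b\<in>B. 0 \<le> fst (lam (a,b)) \<and> 0 \<le> snd (lam (a,b)) \<and> 0 < fst (lam (a,b)) + snd (lam (a,b))) \<Longrightarrow>
   {(\<lambda>x. fst (lam (a,b)) * a x + snd (lam (a,b)) * b x) | a b. a \<in> A \<and> b \<in> B} \<in> K"
  unfolding coherent_def by blast

lemma coherent_replace_element:
  assumes K: "coherent K" and P: "P \<in> K" and Q: "Q \<in> K" and a: "a \<in> P"
    and fg: "\<forall>q\<in>Q. 0 \<le> f q \<and> 0 \<le> g q \<and> 0 < f q + g q"
  shows "(P - {a}) \<union> (\<lambda>q x. f q * a x + g q * q x) ` Q \<in> K"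
proof -
  define lam where "lam = (\<lambda>(p, q). if p = a then (f q, g q) else (1::real, 0::real))"
  obtain q0 where q0: "q0 \<in> Q" using coherent_nonempty[OF K Q] by auto
  have "{(\<lambda>x. fst (lam (p,q)) * p x + snd (lam (p,q)) * q x) | p q. p \<in> P \<and> q \<in> Q}
      = (P - {a}) \<union> (\<lambda>q x. f q * a x + g q * q x) ` Q"
    using a q0 by (auto simp: lam_def)
  moreover have "{(\<lambda>x. fst (lam (p,q)) * p x + snd (lam (p,q)) * q x) | p q. p \<in> P \<and> q \<in> Q} \<in> K"
    using fg by (intro coherent_combination[OF K P Q]) (auto simp: lam_def)
  ultimately show ?thesis by simp
qed

lemma coherent_replace:
  assumes K: "coherent K" and P: "P \<in> K" and T: "finite T"
    and replace: "\<And>a. a \<in> P \<Longrightarrow> \<exists>Q\<in>K. \<exists>f g. (\<forall>q\<in>Q. 0 \<le> f q \<and> 0 \<le> g q \<and> 0 < f q + g q)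
                      \<and> (\<lambda>q x. f q * a x + g q * q x) ` Q \<subseteq> T"
  shows "T \<in> K"
proof -
  have "R \<subseteq> P \<Longrightarrow> D \<subseteq> T \<Longrightarrow> D \<union> R \<in> K \<Longrightarrow> T \<in> K" if "finite R" for D R
    using that
  proof (induction R arbitrary: D)
    case empty
    then show ?case using coherent_superset[OF K _ _ T] by blast
  next
    case (insert a R)
    from replace[of a] insert.prems(1) obtain Q f g where Q: "Q \<in> K"
      and fg: "\<forall>q\<in>Q. 0 \<le> f q \<and> 0 \<le> g q \<and> 0 < f q + g q"
      and QT: "(\<lambda>q x. f q * a x + g q * q x) ` Q \<subseteq> T"
      by blast
    define D' where "D' = (D - {a}) \<union> (\<lambda>q x. f q * a x + g q * q x) ` Q"
    have "(D \<union> insert a R - {a}) \<union> (\<lambda>q x. f q * a x + g q * q x) ` Q \<in> K"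
      by (rule coherent_replace_element[OF K insert.prems(3) Q _ fg]) simp
    also have "(D \<union> insert a R - {a}) \<union> (\<lambda>q x. f q * a x + g q * q x) ` Q = D' \<union> R"
      using insert.hyps(2) by (auto simp: D'_def)
    finally have "D' \<union> R \<in> K" .
    moreover have "D' \<subseteq> T"
      using insert.prems(2) QT by (auto simp: D'_def)
    ultimately show ?case
      using insert.IH[of D'] insert.prems(1) by simp
  qed
  from this[where R = P and D = "{}"] show ?thesis
    using P coherent_finite[OF K P] by simp
qed

lemma coherent_dominated:
  assumes K: "coherent K" and T: "T \<in> K" and S: "finite S"
    and dominated: "\<forall>t\<in>T. \<exists>s\<in>S \<union> {0}. t \<le> s"
  shows "S \<in> K"
proof -
  have "S \<union> {0} \<in> K"
  proof (rule coherent_replace[OF K T])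
    fix t assume "t \<in> T"
    then obtain s where s: "s \<in> S \<union> {0}" "t \<le> s" using dominated by blast
    show "\<exists>Q\<in>K. \<exists>f g. (\<forall>q\<in>Q. 0 \<le> f q \<and> 0 \<le> g q \<and> 0 < f q + g q)
            \<and> (\<lambda>q x. f q * t x + g q * q x) ` Q \<subseteq> S \<union> {0}"
    proof (cases "t = s")
      case True
      have "{\<lambda>_. 1} \<in> K" by (rule coherent_Vpos[OF K]) (simp add: Vpos_iff)
      then show ?thesis
        using s True by (intro bexI[of _ "{\<lambda>_. 1}"] exI[of _ "\<lambda>_. 1"] exI[of _ "\<lambda>_. 0"]) auto
    next
      case False
      with s(2) have "s - t \<in> Vpos"
        by (simp add: Vpos_def)
      then have "{s - t} \<in> K" by (rule coherent_Vpos[OF K])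
      then show ?thesis
        using s by (intro bexI[of _ "{s - t}"] exI[of _ "\<lambda>_. 1"] exI[of _ "\<lambda>_. 1"]) auto
    qed
  qed (use S in simp)
  then have "(S \<union> {0}) - {0} \<in> K" by (rule coherent_Diff_zero[OF K])
  then show ?thesis by (rule coherent_superset[OF K _ _ S]) auto
qed

lemma coherent_posi_witness:
  assumes K: "coherent K"
    and posi_in_K: "\<And>lam. posi_weights n A lam \<Longrightarrow> (\<lambda>u. lincomb n (lam u) u) ` PiE {..<n} A \<in> K"
    and nonneg: "\<forall>w\<in>PiE {..<n} A. \<forall>j<n. 0 \<le> \<nu> w j"
  obtains Q W where "Q \<in> K"
    and "\<forall>q\<in>Q. W q \<in> PiE {..<n} A \<and> (0 < (\<Sum>j<n. \<nu> (W q) j) \<longrightarrow> q = lincomb n (\<nu> (W q)) (W q))"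
proof (cases "n = 0")
  case True
  have "{\<lambda>_. 1} \<in> K" by (rule coherent_Vpos[OF K]) (simp add: Vpos_iff)
  then show ?thesis
    using True by (intro that[of "{\<lambda>_. 1}" "\<lambda>_ _. undefined"]) auto
next
  case False
  \<comment> \<open>Tuples whose weights \<open>\<nu>\<close> vanish impose nothing on \<open>q\<close>, so they get arbitrary weights.\<close>
  define \<mu> where "\<mu> w = (if 0 < (\<Sum>j<n. \<nu> w j) then \<nu> w else (\<lambda>_. 1))" for w
  define h where "h w = lincomb n (\<mu> w) w" for w
  \<comment> \<open>Distinct tuples may give the same option, so each \<open>q\<close> is assigned one of them.\<close>
  define W where "W = inv_into (PiE {..<n} A) h"
  have "posi_weights n A \<mu>"
    using nonneg False by (auto simp: posi_weights_def \<mu>_def)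
  then have "h ` PiE {..<n} A \<in> K"
    unfolding h_def by (rule posi_in_K)
  moreover have "W q \<in> PiE {..<n} A \<and> (0 < (\<Sum>j<n. \<nu> (W q) j) \<longrightarrow> q = lincomb n (\<nu> (W q)) (W q))"
    if "q \<in> h ` PiE {..<n} A" for q
  proof -
    have W: "W q \<in> PiE {..<n} A" and hW: "h (W q) = q"
      using that by (simp_all add: W_def inv_into_into f_inv_into_f)
    have "q = lincomb n (\<nu> (W q)) (W q)" if "0 < (\<Sum>j<n. \<nu> (W q) j)"
    proof -
      from that have "\<mu> (W q) = \<nu> (W q)" by (simp add: \<mu>_def)
      with hW show ?thesis by (simp add: h_def)
    qed
    with W show ?thesis by blast
  qed
  ultimately show ?thesis by (intro that[of "h ` PiE {..<n} A" W]) blast+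
qed

lemma posi_Suc_replacement:
  assumes K: "coherent K"
    and IH: "\<And>lam. posi_weights n A lam \<Longrightarrow> (\<lambda>u. lincomb n (lam u) u) ` PiE {..<n} A \<in> K"
    and lam: "posi_weights (Suc n) A lam" and a: "a \<in> A n"
  shows "\<exists>Q\<in>K. \<exists>f g. (\<forall>q\<in>Q. 0 \<le> f q \<and> 0 \<le> g q \<and> 0 < f q + g q)
           \<and> (\<lambda>q x. f q * a x + g q * q x) ` Q
                \<subseteq> (\<lambda>u. lincomb (Suc n) (lam u) u) ` PiE {..<Suc n} A"
proof -
  define \<nu> where "\<nu> w = lam (w(n := a))" for w
  have \<nu>: "(\<forall>j\<le>n. 0 \<le> \<nu> w j) \<and> 0 \<le> (\<Sum>j<n. \<nu> w j) \<and> 0 < (\<Sum>j<n. \<nu> w j) + \<nu> w n"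
    if "w \<in> PiE {..<n} A" for w
    using lam PiE_fun_upd_Suc[OF that a]
    by (auto simp: posi_weights_def \<nu>_def less_Suc_eq_le intro: sum_nonneg)
  obtain Q W where Q: "Q \<in> K" and W: "\<forall>q\<in>Q. W q \<in> PiE {..<n} A
      \<and> (0 < (\<Sum>j<n. \<nu> (W q) j) \<longrightarrow> q = lincomb n (\<nu> (W q)) (W q))"
    using coherent_posi_witness[OF K IH, of \<nu>] \<nu> by auto
  define f where "f q = \<nu> (W q) n" for q
  define g where "g q = (if 0 < (\<Sum>j<n. \<nu> (W q) j) then 1 else 0 :: real)" for q
  have fg: "0 \<le> f q \<and> 0 \<le> g q \<and> 0 < f q + g q" if "q \<in> Q" for q
    using \<nu>[of "W q"] W that by (auto simp: f_def g_def)
  have "(\<lambda>x. f q * a x + g q * q x) = lincomb (Suc n) (lam ((W q)(n := a))) ((W q)(n := a))"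
    if "q \<in> Q" for q
  proof (cases "0 < (\<Sum>j<n. \<nu> (W q) j)")
    case True
    then show ?thesis using W that by (auto simp: lincomb_fun_upd_Suc f_def g_def \<nu>_def)
  next
    case False
    \<comment> \<open>All weights but the last vanish, and \<open>g q = 0\<close> discards \<open>q\<close>.\<close>
    with \<nu>[of "W q"] W that have "lincomb n (\<nu> (W q)) (W q) = 0"
      by (intro lincomb_eq_0_if_weights_0) auto
    then show ?thesis using False by (simp add: lincomb_fun_upd_Suc f_def g_def \<nu>_def)
  qed
  moreover have "(W q)(n := a) \<in> PiE {..<Suc n} A" if "q \<in> Q" for q
    using W that a by (simp add: PiE_fun_upd_Suc)
  ultimately have "(\<lambda>q x. f q * a x + g q * q x) ` Q
      \<subseteq> (\<lambda>u. lincomb (Suc n) (lam u) u) ` PiE {..<Suc n} A"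
    by blast
  with Q fg show ?thesis by blast
qed

lemma posi_image_in_coherent:
  assumes K: "coherent K" and AK: "\<forall>j<n. A j \<in> K" and lam: "posi_weights n A lam"
  shows "(\<lambda>u. lincomb n (lam u) u) ` PiE {..<n} A \<in> K"
  using AK lam
proof (induction n arbitrary: lam)
  case 0
  have "(\<lambda>_. undefined) \<in> PiE {..<0::nat} A" by simp
  with 0 show ?case by (auto simp: posi_weights_def)
next
  case (Suc n)
  have IH: "\<And>lam. posi_weights n A lam \<Longrightarrow> (\<lambda>u. lincomb n (lam u) u) ` PiE {..<n} A \<in> K"
    using Suc.IH Suc.prems(1) by simp
  have "finite ((\<lambda>u. lincomb (Suc n) (lam u) u) ` PiE {..<Suc n} A)"
    using Suc.prems(1) coherent_finite[OF K] by (intro finite_imageI finite_PiE) auto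
  moreover have "A n \<in> K" using Suc.prems(1) by simp
  ultimately show ?case
    using coherent_replace[OF K] posi_Suc_replacement[OF K IH Suc.prems(2)] by blast
qed

lemma Posi'_in_coherent:
  "coherent K \<Longrightarrow> \<forall>j<n. A j \<in> K \<Longrightarrow> T \<in> Posi' n A \<Longrightarrow> T \<in> K"
  unfolding Posi'_iff using posi_image_in_coherent by blast

section \<open>The criterion describes a coherent set\<close>

definition admissible :: "nat \<Rightarrow> (nat \<Rightarrow> real) \<Rightarrow> 'x opt \<Rightarrow> bool" where
  "admissible n \<omega> s \<longleftrightarrow> (\<forall>j<n. 0 \<le> \<omega> j) \<and> (0 < (\<Sum>j<n. \<omega> j) \<or> s \<in> Vpos)"

text \<open>Pointwise form of the criterion of the theorem: a positive element of \<open>S\<close> is admitted as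
  a bound with zero weights.\<close>
definition posi_bounded :: "nat \<Rightarrow> (nat \<Rightarrow> 'x opt set) \<Rightarrow> 'x opt set \<Rightarrow> bool" where
  "posi_bounded n A S \<longleftrightarrow>
     (\<forall>u\<in>PiE {..<n} A. \<exists>\<omega>. \<exists>s\<in>S \<union> {0}. admissible n \<omega> s \<and> lincomb n \<omega> u \<le> s)"

lemma Vpos_combination:
  assumes "0 \<le> \<alpha>" "0 \<le> \<beta>" "0 < \<alpha> + \<beta>" "\<alpha> = 0 \<or> s1 \<in> Vpos" "\<beta> = 0 \<or> s2 \<in> Vpos"
  shows "(\<lambda>x. \<alpha> * s1 x + \<beta> * s2 x) \<in> Vpos"
proof -
  have nonneg: "0 \<le> \<alpha> * s1 x + \<beta> * s2 x" for x
    using assms by (auto simp: Vpos_iff)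
  have "\<exists>x. 0 < \<alpha> * s1 x + \<beta> * s2 x"
  proof (cases "\<alpha> = 0")
    case True
    with assms obtain x where "0 < s2 x" "0 < \<beta>" by (auto simp: Vpos_iff)
    with True show ?thesis by (metis add_0 mult_pos_pos mult_zero_left)
  next
    case False
    with assms obtain x where "0 < s1 x" "0 < \<alpha>" by (auto simp: Vpos_iff)
    moreover have "0 \<le> \<beta> * s2 x" using assms by (auto simp: Vpos_iff)
    ultimately show ?thesis by (metis add_pos_nonneg mult_pos_pos)
  qed
  with nonneg show ?thesis by (simp add: Vpos_iff)
qed

lemma admissible_combination:
  assumes "admissible n \<omega>1 s1" "admissible n \<omega>2 s2" "0 \<le> \<alpha>" "0 \<le> \<beta>" "0 < \<alpha> + \<beta>"
  shows "admissible n (\<lambda>j. \<alpha> * \<omega>1 j + \<beta> * \<omega>2 j) (\<lambda>x. \<alpha> * s1 x + \<beta> * s2 x)"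
proof -
  have sums: "0 \<le> (\<Sum>j<n. \<omega>1 j)" "0 \<le> (\<Sum>j<n. \<omega>2 j)"
    using assms(1,2) by (auto simp: admissible_def intro: sum_nonneg)
  have sum: "(\<Sum>j<n. \<alpha> * \<omega>1 j + \<beta> * \<omega>2 j) = \<alpha> * (\<Sum>j<n. \<omega>1 j) + \<beta> * (\<Sum>j<n. \<omega>2 j)"
    by (simp add: sum.distrib sum_distrib_left)
  show ?thesis
  proof (cases "0 < \<alpha> * (\<Sum>j<n. \<omega>1 j) + \<beta> * (\<Sum>j<n. \<omega>2 j)")
    case True
    with assms sum show ?thesis by (simp add: admissible_def)
  next
    case False
    moreover have "0 \<le> \<alpha> * (\<Sum>j<n. \<omega>1 j)" "0 \<le> \<beta> * (\<Sum>j<n. \<omega>2 j)"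
      using assms(3,4) sums by simp_all
    ultimately have "\<alpha> * (\<Sum>j<n. \<omega>1 j) = 0" "\<beta> * (\<Sum>j<n. \<omega>2 j) = 0"
      by linarith+
    with assms(1,2) have "\<alpha> = 0 \<or> s1 \<in> Vpos" "\<beta> = 0 \<or> s2 \<in> Vpos"
      by (auto simp: admissible_def)
    with assms show ?thesis
      by (simp add: admissible_def Vpos_combination)
  qed
qed

lemma combination_mono:
  fixes t1 t2 s1 s2 :: "'x opt"
  assumes "t1 \<le> s1" "t2 \<le> s2" "0 \<le> \<alpha>" "0 \<le> \<beta>"
  shows "(\<lambda>x. \<alpha> * t1 x + \<beta> * t2 x) \<le> (\<lambda>x. \<alpha> * s1 x + \<beta> * s2 x)"
  using assms by (simp add: le_fun_def add_mono mult_left_mono)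

lemma posi_bounded_mono:
  assumes "posi_bounded n A S" and "S \<subseteq> S' \<union> {0}"
  shows "posi_bounded n A S'"
  unfolding posi_bounded_def
proof
  fix u assume "u \<in> PiE {..<n} A"
  with assms(1) obtain \<omega> s where "s \<in> S \<union> {0}" "admissible n \<omega> s \<and> lincomb n \<omega> u \<le> s"
    unfolding posi_bounded_def by blast
  moreover from this(1) assms(2) have "s \<in> S' \<union> {0}" by blast
  ultimately show "\<exists>\<omega>. \<exists>s\<in>S' \<union> {0}. admissible n \<omega> s \<and> lincomb n \<omega> u \<le> s" by blast
qed

lemma posi_bounded_Vpos: "u \<in> Vpos \<Longrightarrow> posi_bounded n A {u}"
  unfolding posi_bounded_def admissible_def
  by (intro ballI exI[of _ "\<lambda>_. 0"] bexI[of _ u]) (auto simp: lincomb_def Vpos_iff le_fun_def)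

lemma posi_bounded_component:
  assumes "j < n"
  shows "posi_bounded n A (A j)"
  unfolding posi_bounded_def
proof
  fix u assume u: "u \<in> PiE {..<n} A"
  have "lincomb n (\<lambda>i. if i = j then 1 else 0) u = u j"
    using assms by (simp add: lincomb_def fun_eq_iff if_distrib[where f = "\<lambda>c. c * _"] cong: if_cong)
  moreover have "admissible n (\<lambda>i. if i = j then 1 else 0) (u j)"
    using assms by (simp add: admissible_def)
  moreover have "u j \<in> A j" using u assms by auto
  ultimately show "\<exists>\<omega>. \<exists>s\<in>A j \<union> {0}. admissible n \<omega> s \<and> lincomb n \<omega> u \<le> s"
    by (metis UnI1 order_refl)
qed

lemma posi_bounded_combination:
  assumes B1: "posi_bounded n A B1" and B2: "posi_bounded n A B2"
    and lam: "\<forall>a\<in>B1. \<forall>b\<in>B2. 0 \<le> fst (lam (a,b)) \<and> 0 \<le> snd (lam (a,b)) \<and> 0 < fst (lam (a,b)) + snd (lam (a,b))"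
  shows "posi_bounded n A {(\<lambda>x. fst (lam (a,b)) * a x + snd (lam (a,b)) * b x) | a b. a \<in> B1 \<and> b \<in> B2}"
    (is "posi_bounded n A ?C")
  unfolding posi_bounded_def
proof
  fix u assume u: "u \<in> PiE {..<n} A"
  obtain \<omega>1 s1 where s1: "s1 \<in> B1 \<union> {0}" "admissible n \<omega>1 s1" "lincomb n \<omega>1 u \<le> s1"
    using B1 u unfolding posi_bounded_def by blast
  obtain \<omega>2 s2 where s2: "s2 \<in> B2 \<union> {0}" "admissible n \<omega>2 s2" "lincomb n \<omega>2 u \<le> s2"
    using B2 u unfolding posi_bounded_def by blast
  show "\<exists>\<omega>. \<exists>s\<in>?C \<union> {0}. admissible n \<omega> s \<and> lincomb n \<omega> u \<le> s"
  proof (cases "s1 = 0 \<or> s2 = 0")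
    case True
    with s1 s2 show ?thesis by blast
  next
    case False
    define \<alpha> where "\<alpha> = fst (lam (s1, s2))"
    define \<beta> where "\<beta> = snd (lam (s1, s2))"
    have "0 \<le> \<alpha>" "0 \<le> \<beta>" "0 < \<alpha> + \<beta>"
      using False s1(1) s2(1) lam by (auto simp: \<alpha>_def \<beta>_def)
    then have "admissible n (\<lambda>j. \<alpha> * \<omega>1 j + \<beta> * \<omega>2 j) (\<lambda>x. \<alpha> * s1 x + \<beta> * s2 x)"
      and "lincomb n (\<lambda>j. \<alpha> * \<omega>1 j + \<beta> * \<omega>2 j) u \<le> (\<lambda>x. \<alpha> * s1 x + \<beta> * s2 x)"
      using s1(2,3) s2(2,3) by (simp_all add: admissible_combination lincomb_combination combination_mono)
    moreover have "(\<lambda>x. \<alpha> * s1 x + \<beta> * s2 x) \<in> ?C"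
      using False s1(1) s2(1) by (auto simp: \<alpha>_def \<beta>_def)
    ultimately show ?thesis by blast
  qed
qed

lemma coherent_posi_bounded:
  fixes A :: "nat \<Rightarrow> 'x opt set"
  assumes "\<not> posi_bounded n A {0}"
  shows "coherent {S \<in> optsets. posi_bounded n A S}" (is "coherent ?K")
  unfolding coherent_def
proof (intro conjI ballI allI impI)
  fix B assume "B \<in> ?K"
  then have B: "finite B" "posi_bounded n A B" by (simp_all add: optsets_def)
  have "posi_bounded n A (B - {0})" by (rule posi_bounded_mono[OF B(2)]) blast
  with B(1) show "B - {0} \<in> ?K"
    by (simp add: optsets_def)
  show "B \<union> Q \<in> ?K" if "Q \<in> optsets" for Q
  proof -
    have "posi_bounded n A (B \<union> Q)" by (rule posi_bounded_mono[OF B(2)]) blast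
    with that B(1) show ?thesis by (simp add: optsets_def)
  qed
next
  fix B1 B2 :: "'x opt set" and lam :: "'x opt \<times> 'x opt \<Rightarrow> real \<times> real"
  assume B1: "B1 \<in> ?K" and B2: "B2 \<in> ?K"
    and "\<forall>a\<in>B1. \<forall>b\<in>B2. 0 \<le> fst (lam (a,b)) \<and> 0 \<le> snd (lam (a,b)) \<and> 0 < fst (lam (a,b)) + snd (lam (a,b))"
  moreover have "finite {(\<lambda>x. fst (lam (a,b)) * a x + snd (lam (a,b)) * b x) | a b. a \<in> B1 \<and> b \<in> B2}"
    using B1 B2 finite_image_set2[of "\<lambda>a. a \<in> B1" "\<lambda>b. b \<in> B2"] by (simp add: optsets_def)
  ultimately show "{(\<lambda>x. fst (lam (a,b)) * a x + snd (lam (a,b)) * b x) | a b. a \<in> B1 \<and> b \<in> B2} \<in> ?K"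
    by (simp add: optsets_def posi_bounded_combination)
next
  show "?K \<subseteq> optsets" by blast
  show "{0} \<notin> ?K" using assms by blast
  show "{u} \<in> ?K" if "u \<in> Vpos" for u
    using that by (simp add: optsets_def posi_bounded_Vpos)
qed

lemma criterion_if_posi_bounded:
  assumes "posi_bounded n A S"
  shows "S \<inter> Vpos \<noteq> {} \<or> (n \<noteq> 0 \<and> (\<exists>T\<in>Posi' n A. \<forall>t\<in>T. \<exists>s\<in>S \<union> {0}. t \<le> s))"
proof -
  from assms have "\<forall>u\<in>PiE {..<n} A. \<exists>\<omega>s. snd \<omega>s \<in> S \<union> {0} \<and> admissible n (fst \<omega>s) (snd \<omega>s)
      \<and> lincomb n (fst \<omega>s) u \<le> snd \<omega>s"
    unfolding posi_bounded_def by (metis fst_conv snd_conv)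
  from bchoice[OF this] obtain \<omega>s where bound: "\<forall>u\<in>PiE {..<n} A. snd (\<omega>s u) \<in> S \<union> {0}
      \<and> admissible n (fst (\<omega>s u)) (snd (\<omega>s u)) \<and> lincomb n (fst (\<omega>s u)) u \<le> snd (\<omega>s u)"
    by blast
  show ?thesis
  proof (cases "\<exists>u\<in>PiE {..<n} A. snd (\<omega>s u) \<in> Vpos")
    case True
    then obtain u where "snd (\<omega>s u) \<in> S \<union> {0}" "snd (\<omega>s u) \<in> Vpos"
      using bound by blast
    then have "S \<inter> Vpos \<noteq> {}" by (auto simp: Vpos_def)
    then show ?thesis ..
  next
    case False
    with bound have weights: "posi_weights n A (\<lambda>u. fst (\<omega>s u))"
      by (auto simp: posi_weights_def admissible_def)
    moreover have "n \<noteq> 0"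
    proof
      assume "n = 0"
      moreover have "(\<lambda>_. undefined) \<in> PiE {..<0::nat} A" by simp
      ultimately show False using weights by (auto simp: posi_weights_def)
    qed
    moreover have "(\<lambda>u. lincomb n (fst (\<omega>s u)) u) ` PiE {..<n} A \<in> Posi' n A"
      unfolding Posi'_iff using weights by blast
    moreover have "\<forall>t\<in>(\<lambda>u. lincomb n (fst (\<omega>s u)) u) ` PiE {..<n} A. \<exists>s\<in>S \<union> {0}. t \<le> s"
      using bound by blast
    ultimately show ?thesis by blast
  qed
qed

lemma criterion_in_coherent:
  assumes K: "coherent K" and AK: "A ` {..<n} \<subseteq> K" and S: "finite S"
    and criterion: "S \<inter> Vpos \<noteq> {} \<or> (n \<noteq> 0 \<and> (\<exists>T\<in>Posi' n A. \<forall>t\<in>T. \<exists>s\<in>S \<union> {0}. t \<le> s))"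
  shows "S \<in> K"
  using criterion
proof
  assume "S \<inter> Vpos \<noteq> {}"
  then obtain v where "v \<in> S" "v \<in> Vpos" by blast
  with S show "S \<in> K"
    by (intro coherent_superset[OF K coherent_Vpos[OF K]]) auto
next
  assume "n \<noteq> 0 \<and> (\<exists>T\<in>Posi' n A. \<forall>t\<in>T. \<exists>s\<in>S \<union> {0}. t \<le> s)"
  then obtain T where "T \<in> Posi' n A" "\<forall>t\<in>T. \<exists>s\<in>S \<union> {0}. t \<le> s" by blast
  with AK S show "S \<in> K"
    by (intro coherent_dominated[OF K Posi'_in_coherent[OF K]]) auto
qed

lemma posi_bounded_if_in_Ex:
  assumes A: "\<forall>j<n. A j \<in> optsets" and S: "S \<in> Ex (A ` {..<n})"
  shows "posi_bounded n A S"
proof (cases "posi_bounded n A {0}")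
  case True
  then show ?thesis by (rule posi_bounded_mono) simp
next
  case False
  have "A ` {..<n} \<subseteq> {S \<in> optsets. posi_bounded n A S}"
    using A posi_bounded_component by blast
  with S coherent_posi_bounded[OF False] show ?thesis
    unfolding Ex_def by blast
qed

theorem mainTheorem19:
  fixes n :: nat and A :: "nat \<Rightarrow> ('x \<Rightarrow> real) set" and S :: "('x \<Rightarrow> real) set"
  assumes "\<forall>j<n. A j \<in> optsets"
    and "S \<in> optsets"
  shows "S \<in> Ex (A ` {..<n}) \<longleftrightarrow>
           (S \<inter> Vpos \<noteq> {} \<or>
            (n \<noteq> 0 \<and> (\<exists>T\<in>Posi' n A. \<forall>t\<in>T. \<exists>s\<in>S \<union> {0}. t \<le> s)))"
proof
  assume "S \<in> Ex (A ` {..<n})"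
  with assms(1) show "S \<inter> Vpos \<noteq> {} \<or> (n \<noteq> 0 \<and> (\<exists>T\<in>Posi' n A. \<forall>t\<in>T. \<exists>s\<in>S \<union> {0}. t \<le> s))"
    by (intro criterion_if_posi_bounded posi_bounded_if_in_Ex)
next
  assume "S \<inter> Vpos \<noteq> {} \<or> (n \<noteq> 0 \<and> (\<exists>T\<in>Posi' n A. \<forall>t\<in>T. \<exists>s\<in>S \<union> {0}. t \<le> s))"
  then have "S \<in> K" if "coherent K" "A ` {..<n} \<subseteq> K" for K
    using criterion_in_coherent[OF that] assms(2) by (simp add: optsets_def)
  with assms(2) show "S \<in> Ex (A ` {..<n})" unfolding Ex_def by blast
qed

end
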